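(* Let $\mathbb{A}$ be a set of symbols and let $A=a_1a_2\dots a_m$ be a rainbow sequence with $a_i\in\mathbb{A}$ for all $i=1,\dots,m$. Let $r\ge 0$ and $1\le n_1<n_2<\dots<n_r<m$ be integers, and let $B^0,B^1,\dots,B^{r+1}$ be single symbols (not necessarily distinct from each other) with $B^i\notin\mathbb{A}$ for all $i$. Then the sequence $$S=B^0\,A_{1,n_1}\,B^1\,A_{n_1+1,n_2}\,\dots\,B^r\,A_{n_r+1,m}\,B^{r+1}$$ is nonrepetitive.
   Context: A finite sequence $R=r_1r_2\dots r_{2n}$ ($n\ge1$) is a repetition if $r_i=r_{n+i}$ for all $i=1,\dots,n$. A sequence is repetitive if some block of consecutive terms of it is a repetition, and nonrepetitive otherwise. A sequence of length $k$ consisting of $k$ pairwise different symbols is called rainbow. For a sequence $A=a_1\dots a_m$ and $1\le k\le l\le m$, $A_{k,l}$ denotes the block $a_ka_{k+1}\dots a_l$. *)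

theory Defs
  imports Main
begin

text \<open>Sequences are lists; positions are 1-indexed as in the paper.\<close>

definition block :: "'a list \<Rightarrow> nat \<Rightarrow> nat \<Rightarrow> 'a list" where
  "block A k l = take (l + 1 - k) (drop (k - 1) A)"

definition repetition :: "'a list \<Rightarrow> bool" where
  "repetition R \<longleftrightarrow> (\<exists>h\<ge>1. length R = 2 * h \<and> (\<forall>i\<in>{1..h}. R ! (i - 1) = R ! (h + i - 1)))"

definition repetitive :: "'a list \<Rightarrow> bool" where
  "repetitive S \<longleftrightarrow> (\<exists>k l. 1 \<le> k \<and> k \<le> l \<and> l \<le> length S \<and> repetition (block S k l))"

definition nonrepetitive :: "'a list \<Rightarrow> bool" where
  "nonrepetitive S \<longleftrightarrow> \<not> repetitive S"

definition rainbow :: "'a list \<Rightarrow> bool" where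
  "rainbow A \<longleftrightarrow> distinct A"

text \<open>The sequence B^0 A_{1,n_1} B^1 A_{n_1+1,n_2} ... B^r A_{n_r+1,m} B^{r+1}.\<close>
definition insert_seq :: "'a list \<Rightarrow> nat \<Rightarrow> (nat \<Rightarrow> nat) \<Rightarrow> (nat \<Rightarrow> 'a) \<Rightarrow> 'a list" where
  "insert_seq A r n B =
     concat (map (\<lambda>j. B j # block A ((if j = 0 then 0 else n j) + 1)
                                   (if j = r then length A else n (Suc j))) [0..<Suc r])
     @ [B (Suc r)]"

end

theory Submission
  imports Defs
begin

text \<open>The symbols of the alphabet occur in \<open>S\<close> exactly once each, since they spell out the
  rainbow sequence \<open>A\<close>, and no two adjacent symbols of \<open>S\<close> lie outside the alphabet, since every
  block of \<open>A\<close> between two inserted symbols is nonempty. In a repetition \<open>xx\<close> the first symbols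
  of the two halves coincide, and so do their second symbols (or, if \<open>|x| = 1\<close>, the two symbols
  are adjacent and equal). A symbol occurring twice is outside the alphabet, so \<open>S\<close> would contain
  two adjacent symbols outside the alphabet.\<close>

lemma repetitiveE:
  assumes "repetitive S"
  obtains p h where "h \<ge> 1" "p + 2 * h \<le> length S" "\<And>i. i < h \<Longrightarrow> S ! (p + i) = S ! (p + h + i)"
proof -
  obtain k l where kl: "1 \<le> k" "k \<le> l" "l \<le> length S" and rep: "repetition (block S k l)"
    using assms unfolding repetitive_def by blast
  obtain h where h: "h \<ge> 1" "length (block S k l) = 2 * h"
    and eq: "\<And>i. i \<in> {1..h} \<Longrightarrow> block S k l ! (i - 1) = block S k l ! (h + i - 1)"
    using rep unfolding repetition_def by blast
  have len: "k - 1 + 2 * h \<le> length S"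
    using h(2) kl by (simp add: block_def)
  have nth: "block S k l ! j = S ! (k - 1 + j)" if "j < 2 * h" for j
    using that h(2) by (simp add: block_def)
  have "S ! (k - 1 + i) = S ! (k - 1 + h + i)" if "i < h" for i
    using eq[of "Suc i"] nth[of i] nth[of "h + i"] that by (simp add: add.assoc)
  with h(1) len show thesis by (rule that)
qed

lemma nth_eq_not_in_distinct_filter:
  assumes "distinct (filter P S)" "p < q" "q < length S" "S ! p = S ! q"
  shows "\<not> P (S ! p)"
proof
  assume P: "P (S ! p)"
  have "S ! p \<in> set (filter P (take q S))"
    using assms P by (auto simp: in_set_conv_nth intro!: exI[of _ p])
  moreover have "S ! q \<in> set (filter P (drop q S))"
    using assms P by (auto simp: in_set_conv_nth intro!: exI[of _ 0])
  moreover have "distinct (filter P (take q S) @ filter P (drop q S))"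
    using assms(1) by (metis append_take_drop_id filter_append)
  ultimately show False
    using assms(4) by auto
qed

lemma nonrepetitive_if_distinct_filter:
  assumes distinct: "distinct (filter P S)"
    and adjacent: "successively (\<lambda>x y. P x \<or> P y) S"
  shows "nonrepetitive S"
  unfolding nonrepetitive_def
proof
  assume "repetitive S"
  then obtain p h where h: "h \<ge> 1" "p + 2 * h \<le> length S"
    and square: "\<And>i. i < h \<Longrightarrow> S ! (p + i) = S ! (p + h + i)"
    by (elim repetitiveE) blast
  have first: "\<not> P (S ! p)"
    using nth_eq_not_in_distinct_filter[OF distinct, of p "p + h"] square[of 0] h by simp
  have "\<not> P (S ! Suc p)"
  proof (cases "h = 1")
    case True
    then show ?thesis
      using first square[of 0] by simp
  next
    case False
    then show ?thesis
      using nth_eq_not_in_distinct_filter[OF distinct, of "p + 1" "p + h + 1"] square[of 1] h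
      by simp
  qed
  with first show False
    using successively_nth[OF adjacent, of p] h by simp
qed

lemma successively_interleaved:
  assumes "\<forall>j\<in>set js. c j \<noteq> [] \<and> (\<forall>x\<in>set (c j). P x)"
  shows "successively (\<lambda>x y. P x \<or> P y) (concat (map (\<lambda>j. b j # c j) js) @ [z])"
  using assms
proof (induction js)
  case (Cons j js)
  have "successively (\<lambda>x y. P x \<or> P y) (c j)"
    using Cons.prems by (auto simp: successively_conv_nth)
  with Cons show ?case
    by (auto simp: successively_Cons successively_append_iff hd_append)
qed simp

lemma filter_interleaved:
  assumes "\<forall>j\<in>set js. \<not> P (b j) \<and> (\<forall>x\<in>set (c j). P x)" "\<not> P z"
  shows "filter P (concat (map (\<lambda>j. b j # c j) js) @ [z]) = concat (map c js)"
  using assms by (induction js) auto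

definition slice :: "'a list \<Rightarrow> nat \<Rightarrow> nat \<Rightarrow> 'a list" where
  "slice xs i j = take (j - i) (drop i xs)"

lemma slice_append:
  assumes "i \<le> j" "j \<le> k"
  shows "slice xs i j @ slice xs j k = slice xs i k"
proof -
  have "k - i = (j - i) + (k - j)" "drop j xs = drop (j - i) (drop i xs)"
    using assms by simp_all
  then show ?thesis
    unfolding slice_def by (simp only: take_add)
qed

lemma concat_slices:
  assumes "mono f"
  shows "concat (map (\<lambda>j. slice xs (f j) (f (Suc j))) [0..<k]) = slice xs (f 0) (f k)"
proof (induction k)
  case (Suc k)
  have "f 0 \<le> f k" "f k \<le> f (Suc k)"
    using assms by (simp_all add: monoD)
  with Suc.IH show ?case
    by (simp add: slice_append)
qed (simp add: slice_def)

lemma length_slice: "length (slice xs i j) = min (j - i) (length xs - i)"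
  by (simp add: slice_def)

lemma insert_seq_eq_interleaved:
  assumes "length A \<ge> 1"
    and "r \<ge> 1 \<Longrightarrow> 1 \<le> n 1"
    and "\<And>i. 1 \<le> i \<Longrightarrow> i < r \<Longrightarrow> n i < n (Suc i)"
    and "r \<ge> 1 \<Longrightarrow> n r < length A"
  obtains C where "insert_seq A r n B = concat (map (\<lambda>j. B j # C j) [0..<Suc r]) @ [B (Suc r)]"
    and "concat (map C [0..<Suc r]) = A"
    and "\<And>j. j \<le> r \<Longrightarrow> C j \<noteq> []"
proof
  define f where "f j = (if j = 0 then 0 else if j \<le> r then n j else length A)" for j
  define C where "C j = slice A (f j) (f (Suc j))" for j
  have f_less: "f j < f (Suc j)" if "j \<le> r" for j
    using that assms by (cases "j = 0"; cases "j = r") (auto simp: f_def)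
  have "f j \<le> f (Suc j)" for j
    using f_less[of j] by (cases "j \<le> r") (auto simp: f_def)
  then have f_mono: "mono f"
    by (simp add: mono_iff_le_Suc)
  have f_le: "f j \<le> length A" for j
    using monoD[OF f_mono, of j "Suc r"] monoD[OF f_mono, of "Suc r" j] by (auto simp: f_def)
  show "insert_seq A r n B = concat (map (\<lambda>j. B j # C j) [0..<Suc r]) @ [B (Suc r)]"
    unfolding insert_seq_def
    by (intro arg_cong2[where f = "(@)"] arg_cong[where f = concat] map_cong)
      (auto simp: block_def C_def slice_def f_def)
  show "concat (map C [0..<Suc r]) = A"
    unfolding C_def concat_slices[OF f_mono] by (simp add: f_def slice_def)
  show "C j \<noteq> []" if "j \<le> r" for j
    using f_less[OF that] f_le[of "Suc j"] by (simp add: C_def length_slice flip: length_0_conv)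
qed

theorem corollary2:
  fixes Alph :: "'a set" and A :: "'a list" and r :: nat
    and n :: "nat \<Rightarrow> nat" and B :: "nat \<Rightarrow> 'a"
  assumes "rainbow A"
    and "set A \<subseteq> Alph"
    and "length A \<ge> 1"
    and "r \<ge> 1 \<Longrightarrow> 1 \<le> n 1"
    and "\<And>i. 1 \<le> i \<Longrightarrow> i < r \<Longrightarrow> n i < n (Suc i)"
    and "r \<ge> 1 \<Longrightarrow> n r < length A"
    and "\<And>i. i \<le> Suc r \<Longrightarrow> B i \<notin> Alph"
  shows "nonrepetitive (insert_seq A r n B)"
proof -
  obtain C where S: "insert_seq A r n B = concat (map (\<lambda>j. B j # C j) [0..<Suc r]) @ [B (Suc r)]"
    and concat_C: "concat (map C [0..<Suc r]) = A" and C_nonempty: "\<And>j. j \<le> r \<Longrightarrow> C j \<noteq> []"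
    using insert_seq_eq_interleaved[OF assms(3-6)] by blast
  have C_in_Alph: "set (C j) \<subseteq> Alph" if "j \<le> r" for j
    using that assms(2) unfolding concat_C[symmetric] by (force simp del: upt_Suc)
  have "filter (\<lambda>x. x \<in> Alph) (insert_seq A r n B) = A"
    unfolding S using assms(7) C_in_Alph concat_C
    by (subst filter_interleaved) (force simp del: upt_Suc simp: less_Suc_eq_le)+
  then have "distinct (filter (\<lambda>x. x \<in> Alph) (insert_seq A r n B))"
    using assms(1) by (simp add: rainbow_def)
  moreover have "successively (\<lambda>x y. x \<in> Alph \<or> y \<in> Alph) (insert_seq A r n B)"
    unfolding S using C_nonempty C_in_Alph
    by (intro successively_interleaved) (force simp del: upt_Suc simp: less_Suc_eq_le)+
  ultimately show ?thesis
    by (rule nonrepetitive_if_distinct_filter)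
qed

end
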